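(* If $s\in\{A,B\}^{\mathbb{N}}$ is a computable word, then $\mathrm{NADG}_s(\mathbb{Z}^d)$ is recursively enumerable.
   Context: A pattern is $p=(S,f)$ with $S\subseteq\mathbb{Z}^d$, $f\in\mathcal{A}^S$; a finite pattern $q=(S',g)$ appears in $p=(S,f)$ if $v+S'\subseteq S$ and $f(v+j)=g(j)$ for all $j\in S'$, for some $v\in\mathbb{Z}^d$. For a turn order word $s=s_0s_1\cdots\in\{A,B\}^{\mathbb{N}}$, the non-alternating Domino game $\Gamma_s(\mathcal{A},\mathcal{F},\mathbb{Z}^d)$ (finite alphabet $\mathcal{A}$, finite set $\mathcal{F}$ of finite patterns) starts from the empty pattern, and at turn $i$ player $s_i$ either passes or colours one uncoloured cell of $\mathbb{Z}^d$ with a colour of $\mathcal{A}$. As soon as a pattern of $\mathcal{F}$ appears in the current pattern, $A$ wins; $B$ wins if this never happens. $\mathrm{NADG}_s(\mathbb{Z}^d)$ is the problem: given $(\mathcal{A},\mathcal{F})$, does $A$ have a winning strategy in $\Gamma_s(\mathcal{A},\mathcal{F},\mathbb{Z}^d)$? A word $s$ is computable if $i\mapsto s_i$ is computable. *)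

theory Defs
  imports Main "HOL-Library.Nat_Bijection"
begin

datatype recf = Zr | Sc | Id nat | Cn recf "recf list" | Pr recf recf | Mn recf

inductive eval :: "recf \<Rightarrow> nat list \<Rightarrow> nat \<Rightarrow> bool" where
  eval_Zr: "eval Zr xs 0"
| eval_Sc: "eval Sc (x # xs) (Suc x)"
| eval_Id: "i < length xs \<Longrightarrow> eval (Id i) xs (xs ! i)"
| eval_Cn: "list_all2 (\<lambda>g r. eval g xs r) gs rs \<Longrightarrow> eval f rs y \<Longrightarrow> eval (Cn f gs) xs y"
| eval_Pr0: "eval f xs y \<Longrightarrow> eval (Pr f g) (0 # xs) y"
| eval_PrS: "eval (Pr f g) (n # xs) r \<Longrightarrow> eval g (n # r # xs) y \<Longrightarrow> eval (Pr f g) (Suc n # xs) y"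
| eval_Mn: "eval f (n # xs) 0 \<Longrightarrow> (\<forall>m<n. \<exists>r. eval f (m # xs) r \<and> r \<noteq> 0) \<Longrightarrow> eval (Mn f) xs n"

definition rec_enum :: "nat set \<Rightarrow> bool" where
  "rec_enum L \<longleftrightarrow> (\<exists>f. \<forall>n. n \<in> L \<longleftrightarrow> (\<exists>y. eval f [n] y))"

datatype player = PlA | PlB

definition computable_word :: "(nat \<Rightarrow> player) \<Rightarrow> bool" where
  "computable_word s \<longleftrightarrow>
     (\<exists>f. \<forall>i. eval f [i] (if s i = PlA then 0 else 1))"

text \<open>Alphabet: {0..<k}. Cells of Z^d: integer lists of length d.
  Patterns: partial maps from cells to colours. A finite pattern in an instance is
  given as a list of (cell, colour) pairs.\<close>

type_synonym cell = "int list"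
type_synonym config = "cell \<Rightarrow> nat option"
type_synonym fpattern = "(cell \<times> nat) list"

datatype move = Pass | Put cell nat

definition vadd :: "cell \<Rightarrow> cell \<Rightarrow> cell" where
  "vadd v j = map2 (+) v j"

definition appears :: "nat \<Rightarrow> (cell \<Rightarrow> nat option) \<Rightarrow> config \<Rightarrow> bool" where
  "appears d q p \<longleftrightarrow> (\<exists>v. length v = d \<and> (\<forall>j \<in> dom q. p (vadd v j) = q j))"

text \<open>Applying a move; an illegal move is treated as a pass.\<close>
definition apply_move :: "nat \<Rightarrow> nat \<Rightarrow> config \<Rightarrow> move \<Rightarrow> config" where
  "apply_move k d c m = (case m of Pass \<Rightarrow> c
     | Put x a \<Rightarrow> if length x = d \<and> a < k \<and> c x = None then c(x \<mapsto> a) else c)"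

definition config_of :: "nat \<Rightarrow> nat \<Rightarrow> move list \<Rightarrow> config" where
  "config_of k d h = fold (\<lambda>m c. apply_move k d c m) h Map.empty"

type_synonym strategy = "move list \<Rightarrow> move"

primrec history :: "(nat \<Rightarrow> player) \<Rightarrow> strategy \<Rightarrow> strategy \<Rightarrow> nat \<Rightarrow> move list" where
  "history s sA sB 0 = []"
| "history s sA sB (Suc i) =
     history s sA sB i @ [(if s i = PlA then sA else sB) (history s sA sB i)]"

definition A_wins_play :: "nat \<Rightarrow> nat \<Rightarrow> fpattern list \<Rightarrow> (nat \<Rightarrow> player) \<Rightarrow> strategy \<Rightarrow> strategy \<Rightarrow> bool" where
  "A_wins_play k d F s sA sB \<longleftrightarrow>
     (\<exists>i. \<exists>q \<in> set F. appears d (map_of q) (config_of k d (history s sA sB i)))"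

definition A_has_winning_strategy :: "nat \<Rightarrow> nat \<Rightarrow> fpattern list \<Rightarrow> (nat \<Rightarrow> player) \<Rightarrow> bool" where
  "A_has_winning_strategy k d F s \<longleftrightarrow> (\<exists>sA. \<forall>sB. A_wins_play k d F s sA sB)"

definition valid_instance :: "nat \<Rightarrow> nat \<Rightarrow> fpattern list \<Rightarrow> bool" where
  "valid_instance k d F \<longleftrightarrow>
     (\<forall>q \<in> set F. distinct (map fst q) \<and> (\<forall>(x, a) \<in> set q. length x = d \<and> a < k))"

definition decode_entry :: "nat \<Rightarrow> cell \<times> nat" where
  "decode_entry e = (case prod_decode e of (c, a) \<Rightarrow> (map int_decode (list_decode c), a))"

definition decode_instance :: "nat \<Rightarrow> nat \<times> fpattern list" where
  "decode_instance n = (case prod_decode n of (k, m) \<Rightarrow>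
     (k, map (\<lambda>p. map decode_entry (list_decode p)) (list_decode m)))"

definition NADG :: "(nat \<Rightarrow> player) \<Rightarrow> nat \<Rightarrow> nat set" where
  "NADG s d = {n. case decode_instance n of (k, F) \<Rightarrow>
      valid_instance k d F \<and> A_has_winning_strategy k d F s}"

end

theory Submission
  imports Defs
begin

text \<open>If A has a winning strategy, then A can already force a forbidden pattern when both players
  are confined to a finite region \<open>R\<close> of the board: the positions from which A can force a win
  form a well-founded tree, B's placements outside the region of the pass move are as good as
  a pass, and in each node only finitely many regions have to be combined. The winning part of
  the game tree is then a finite set \<open>L\<close> of histories, each of which shows a pattern, or is
  A's turn with some move in \<open>R\<close> leading into \<open>L\<close>, or is B's turn with all moves in \<open>R\<close> leading
  into \<open>L\<close>; conversely, any such \<open>(R, L)\<close> yields a winning strategy, since \<open>L\<close> bounds the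
  length of the play. Whether a number codes such a certificate for a given instance is decided
  by a primitive recursive procedure that queries the turn word \<open>s\<close>, so for computable \<open>s\<close>
  an unbounded search for a certificate halts exactly on the instances won by A.\<close>

section \<open>Partial recursive functions\<close>

lemma list_all2_functional:
  assumes "list_all2 (\<lambda>x y. P x y \<and> (\<forall>y'. P x y' \<longrightarrow> y = y')) xs ys" and "list_all2 P xs zs"
  shows "ys = zs"
proof (rule nth_equalityI)
  show "length ys = length zs"
    using assms by (simp add: list_all2_conv_all_nth)
  show "ys ! i = zs ! i" if "i < length ys" for i
  proof -
    have i: "i < length xs" using that assms(1) by (simp add: list_all2_lengthD)
    have "\<forall>y'. P (xs ! i) y' \<longrightarrow> ys ! i = y'" using list_all2_nthD[OF assms(1) i] by blast
    then show ?thesis using list_all2_nthD[OF assms(2) i] by blast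
  qed
qed

lemma eval_deterministic: "eval f xs y \<Longrightarrow> eval f xs y' \<Longrightarrow> y = y'"
proof (induction arbitrary: y' rule: eval.induct)
  case (eval_Zr xs)
  from eval_Zr.prems show ?case by (cases rule: eval.cases) auto
next
  case (eval_Sc x xs)
  from eval_Sc.prems show ?case by (cases rule: eval.cases) auto
next
  case (eval_Id i xs)
  from eval_Id.prems show ?case by (cases rule: eval.cases) auto
next
  case (eval_Cn xs gs rs f y)
  from eval_Cn.prems obtain rs' where rs': "list_all2 (\<lambda>g r. eval g xs r) gs rs'" and "eval f rs' y'"
    by (cases rule: eval.cases) auto
  moreover have "rs = rs'" using eval_Cn.IH(1) rs' by (rule list_all2_functional)
  ultimately show ?case using eval_Cn.IH(2) by blast
next
  case (eval_Mn f n xs)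
  from eval_Mn.prems have "eval f (y' # xs) 0 \<and> (\<forall>m<y'. \<exists>r. eval f (m # xs) r \<and> r \<noteq> 0)"
    by (cases rule: eval.cases) (auto simp del: neq0_conv)
  then have y'_zero: "eval f (y' # xs) 0" and below_y': "\<forall>m<y'. \<exists>r. eval f (m # xs) r \<and> r \<noteq> 0"
    by blast+
  show ?case
  proof (cases n y' rule: linorder_cases)
    case less
    then obtain r where "eval f (n # xs) r" "r \<noteq> 0" using below_y' by blast
    then show ?thesis using eval_Mn.IH(1) by auto
  next
    case greater
    then show ?thesis using y'_zero eval_Mn.IH(2) by blast
  qed
next
  case (eval_Pr0 f xs y g)
  from eval_Pr0.prems show ?case by (cases rule: eval.cases) (use eval_Pr0.IH in auto)
next
  case (eval_PrS f g n xs r y)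
  from eval_PrS.prems show ?case by (cases rule: eval.cases) (use eval_PrS.IH in auto)
qed


lemma eval_IdI: "i < length xs \<Longrightarrow> y = xs ! i \<Longrightarrow> eval (Id i) xs y"
  using eval_Id by simp

lemma eval_Cn_unary: "eval g xs r \<Longrightarrow> eval f [r] y \<Longrightarrow> eval (Cn f [g]) xs y"
  by (rule eval_Cn[where rs="[r]"]) auto

lemma eval_Cn_binary:
  "eval g1 xs r1 \<Longrightarrow> eval g2 xs r2 \<Longrightarrow> eval f [r1, r2] y \<Longrightarrow> eval (Cn f [g1, g2]) xs y"
  by (rule eval_Cn[where rs="[r1, r2]"]) auto

lemma eval_Pr_iterate:
  assumes "eval f xs (F 0)" and "\<And>i. eval g (i # F i # xs) (F (Suc i))"
  shows "eval (Pr f g) (m # xs) (F m)"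
  by (induction m) (auto intro: eval.intros assms)

primrec rec_num :: "nat \<Rightarrow> recf" where
  "rec_num 0 = Zr"
| "rec_num (Suc c) = Cn Sc [rec_num c]"

definition rec_add :: recf where "rec_add = Pr (Id 0) (Cn Sc [Id 1])"
definition rec_predecessor :: recf where "rec_predecessor = Pr Zr (Id 0)"
definition rec_monus :: recf where "rec_monus = Pr (Id 0) (Cn rec_predecessor [Id 1])"
definition rec_mult :: recf where "rec_mult = Pr Zr (Cn rec_add [Id 1, Id 2])"

lemma eval_rec_num: "eval (rec_num c) xs c"
  by (induction c) (auto intro!: eval.intros eval_Cn_unary)

lemma eval_rec_add: "eval rec_add [x, y] (x + y)"
proof -
  have "eval (Pr (Id 0) (Cn Sc [Id 1])) [x, y] ((\<lambda>x. x + y) x)"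
  proof (rule eval_Pr_iterate)
    show "eval (Id 0) [y] (0 + y)" by (rule eval_IdI) auto
    show "eval (Cn Sc [Id 1]) [i, i + y, y] (Suc i + y)" for i
      by (rule eval_Cn_unary[OF eval_IdI[of 1]]) (auto intro: eval_Sc)
  qed
  then show ?thesis by (simp add: rec_add_def)
qed

lemma eval_rec_predecessor: "eval rec_predecessor [x] (x - 1)"
proof -
  have "eval (Pr Zr (Id 0)) [x] ((\<lambda>x. x - 1) x)"
    by (rule eval_Pr_iterate) (auto intro: eval_Zr eval_IdI)
  then show ?thesis by (simp add: rec_predecessor_def)
qed

lemma eval_rec_monus: "eval rec_monus [y, x] (x - y)"
proof -
  have "eval (Pr (Id 0) (Cn rec_predecessor [Id 1])) [y, x] ((\<lambda>y. x - y) y)"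
  proof (rule eval_Pr_iterate)
    show "eval (Id 0) [x] (x - 0)" by (rule eval_IdI) auto
    show "eval (Cn rec_predecessor [Id 1]) [i, x - i, x] (x - Suc i)" for i
      using eval_Cn_unary[OF eval_IdI eval_rec_predecessor, of 1 "[i, x - i, x]"] by simp
  qed
  then show ?thesis by (simp add: rec_monus_def)
qed

lemma eval_rec_mult: "eval rec_mult [x, y] (x * y)"
proof -
  have "eval (Pr Zr (Cn rec_add [Id 1, Id 2])) [x, y] ((\<lambda>x. x * y) x)"
  proof (rule eval_Pr_iterate)
    show "eval Zr [y] (0 * y)" using eval_Zr by simp
    show "eval (Cn rec_add [Id 1, Id 2]) [i, i * y, y] (Suc i * y)" for i
      using eval_Cn_binary[OF eval_IdI[of 1] eval_IdI[of 2] eval_rec_add, of "[i, i * y, y]"]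
      by (simp add: add.commute)
  qed
  then show ?thesis by (simp add: rec_mult_def)
qed

lemma rec_enum_projection:
  assumes g: "\<And>c n. eval g [c, n] (of_bool (\<not> P c n))"
  shows "rec_enum {n. \<exists>c. P c n}"
  unfolding rec_enum_def
proof (intro exI allI)
  fix n
  show "n \<in> {n. \<exists>c. P c n} \<longleftrightarrow> (\<exists>y. eval (Mn g) [n] y)"
  proof
    assume "n \<in> {n. \<exists>c. P c n}"
    then have "P (LEAST c. P c n) n" "\<And>m. m < (LEAST c. P c n) \<Longrightarrow> \<not> P m n"
      by (auto intro: LeastI_ex dest: not_less_Least)
    then have "eval (Mn g) [n] (LEAST c. P c n)"
      using g by (intro eval_Mn) (metis of_bool_eq_0_iff, metis of_bool_eq_0_iff)
    then show "\<exists>y. eval (Mn g) [n] y" ..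
  next
    assume "\<exists>y. eval (Mn g) [n] y"
    then obtain c where "eval g [c, n] 0" by (auto elim: eval.cases)
    with g[of c n] show "n \<in> {n. \<exists>c. P c n}" by (auto dest: eval_deterministic)
  qed
qed

section \<open>Primitive recursive expressions relative to an oracle\<close>

text \<open>Variables are de Bruijn indices into the argument list, out-of-range ones reading 0;
  \<open>BSum\<close>, \<open>Iter\<close> and \<open>Bind\<close> bind \<open>V 0\<close> in their second argument.\<close>

datatype pexp = V nat | K nat | Add pexp pexp | Monus pexp pexp | Mult pexp pexp
  | BSum pexp pexp | Iter pexp pexp pexp | Bind pexp pexp | Oracle pexp

primrec peval :: "(nat \<Rightarrow> nat) \<Rightarrow> pexp \<Rightarrow> nat list \<Rightarrow> nat" where
  "peval w (V i) xs = (if i < length xs then xs ! i else 0)"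
| "peval w (K c) xs = c"
| "peval w (Add a b) xs = peval w a xs + peval w b xs"
| "peval w (Monus a b) xs = peval w a xs - peval w b xs"
| "peval w (Mult a b) xs = peval w a xs * peval w b xs"
| "peval w (BSum b e) xs = (\<Sum>i<peval w b xs. peval w e (i # xs))"
| "peval w (Iter a e c) xs = ((\<lambda>r. peval w e (r # xs)) ^^ peval w c xs) (peval w a xs)"
| "peval w (Bind a e) xs = peval w e (peval w a xs # xs)"
| "peval w (Oracle a) xs = w (peval w a xs)"

definition rec_ids :: "nat \<Rightarrow> recf list" where
  "rec_ids n = map Id [0..<n]"

definition rec_ids_skip2 :: "nat \<Rightarrow> recf list" where
  "rec_ids_skip2 n = map (\<lambda>j. Id (j + 2)) [0..<n]"

text \<open>\<open>compile orc e n\<close> computes \<open>e\<close> on argument lists of length \<open>n\<close>; a bound variable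
  becomes an extra first argument, and the step functions of \<open>Pr\<close> drop the recursion
  counter or the previous value through \<open>rec_ids_skip2\<close>.\<close>

primrec compile :: "recf \<Rightarrow> pexp \<Rightarrow> nat \<Rightarrow> recf" where
  "compile orc (V i) n = (if i < n then Id i else Zr)"
| "compile orc (K c) n = rec_num c"
| "compile orc (Add a b) n = Cn rec_add [compile orc a n, compile orc b n]"
| "compile orc (Monus a b) n = Cn rec_monus [compile orc b n, compile orc a n]"
| "compile orc (Mult a b) n = Cn rec_mult [compile orc a n, compile orc b n]"
| "compile orc (BSum b e) n =
     Cn (Pr Zr (Cn rec_add [Id 1, Cn (compile orc e (Suc n)) (Id 0 # rec_ids_skip2 n)]))
       (compile orc b n # rec_ids n)"
| "compile orc (Iter a e c) n =
     Cn (Pr (compile orc a n) (Cn (compile orc e (Suc n)) (Id 1 # rec_ids_skip2 n)))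
       (compile orc c n # rec_ids n)"
| "compile orc (Bind a e) n = Cn (compile orc e (Suc n)) (compile orc a n # rec_ids n)"
| "compile orc (Oracle a) n = Cn orc [compile orc a n]"

lemma eval_Cn_bind:
  assumes "length xs = n" and "eval g xs r" and "eval f (r # xs) y"
  shows "eval (Cn f (g # rec_ids n)) xs y"
proof (rule eval_Cn)
  have "list_all2 (\<lambda>h v. eval h xs v) (rec_ids n) xs"
    using assms(1) by (auto simp: rec_ids_def list_all2_conv_all_nth intro: eval_IdI)
  then show "list_all2 (\<lambda>h v. eval h xs v) (g # rec_ids n) (r # xs)"
    using assms(2) by simp
qed (fact assms(3))

lemma eval_Cn_skip2:
  assumes "length xs = n" and "j < 2" and "eval f ((i # r # xs) ! j # xs) y"
  shows "eval (Cn f (Id j # rec_ids_skip2 n)) (i # r # xs) y"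
proof (rule eval_Cn)
  have "list_all2 (\<lambda>h v. eval h (i # r # xs) v) (rec_ids_skip2 n) xs"
    using assms(1) by (auto simp: rec_ids_skip2_def list_all2_conv_all_nth intro: eval_IdI)
  then show "list_all2 (\<lambda>h v. eval h (i # r # xs) v) (Id j # rec_ids_skip2 n) ((i # r # xs) ! j # xs)"
    using assms(2) by (simp add: eval_IdI)
qed (fact assms(3))

lemma eval_compile:
  assumes orc: "\<And>i. eval orc [i] (w i)"
  shows "length xs = n \<Longrightarrow> eval (compile orc e n) xs (peval w e xs)"
proof (induction e arbitrary: n xs)
  case (BSum b e)
  let ?S = "\<lambda>m. \<Sum>i<m. peval w e (i # xs)"
  have e: "eval (compile orc e (Suc n)) (i # xs) (peval w e (i # xs))" for i
    using BSum.IH(2)[of "i # xs" "Suc n"] BSum.prems by simp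
  have "eval (Cn rec_add [Id 1, Cn (compile orc e (Suc n)) (Id 0 # rec_ids_skip2 n)])
      (i # ?S i # xs) (?S (Suc i))" for i
    using BSum.prems e
    by (auto intro!: eval_Cn_binary[OF _ _ eval_rec_add] eval_IdI eval_Cn_skip2)
  then have "eval (Pr Zr (Cn rec_add [Id 1, Cn (compile orc e (Suc n)) (Id 0 # rec_ids_skip2 n)]))
      (m # xs) (?S m)" for m
    by (intro eval_Pr_iterate) (auto intro: eval_Zr)
  then show ?case using BSum by (auto intro: eval_Cn_bind)
next
  case (Iter a e c)
  let ?F = "\<lambda>m. ((\<lambda>r. peval w e (r # xs)) ^^ m) (peval w a xs)"
  have e: "eval (compile orc e (Suc n)) (r # xs) (peval w e (r # xs))" for r
    using Iter.IH(2)[of "r # xs" "Suc n"] Iter.prems by simp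
  have "eval (Pr (compile orc a n) (Cn (compile orc e (Suc n)) (Id 1 # rec_ids_skip2 n)))
      (m # xs) (?F m)" for m
    using Iter e by (intro eval_Pr_iterate) (auto intro!: eval_Cn_skip2)
  then show ?case using eval_Cn_bind[OF Iter.prems Iter.IH(3)[OF Iter.prems]] by simp
next
  case (Bind a e)
  have "eval (compile orc e (Suc n)) (r # xs) (peval w e (r # xs))" for r
    using Bind.IH(2)[of "r # xs" "Suc n"] Bind.prems by simp
  then show ?case using eval_Cn_bind[OF Bind.prems Bind.IH(1)[OF Bind.prems]] by simp
qed (auto intro: eval_IdI eval_Zr eval_rec_num eval_Cn_unary orc eval_Cn_binary[OF _ _ eval_rec_add]
    eval_Cn_binary[OF _ _ eval_rec_monus] eval_Cn_binary[OF _ _ eval_rec_mult])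

lemma rec_enum_projection_pexp:
  assumes orc: "\<And>i. eval orc [i] (w i)" and e: "\<And>c n. peval w e [c, n] = of_bool (P c n)"
  shows "rec_enum {n. \<exists>c. P c n}"
proof (rule rec_enum_projection)
  show "eval (compile orc (Monus (K 1) e) 2) [c, n] (of_bool (\<not> P c n))" for c n
    using eval_compile[OF orc, of "[c, n]" 2 "Monus (K 1) e"] e by (cases "P c n") simp_all
qed

primrec lift :: "nat \<Rightarrow> pexp \<Rightarrow> pexp" where
  "lift k (V i) = V (if i < k then i else Suc i)"
| "lift k (K c) = K c"
| "lift k (Add a b) = Add (lift k a) (lift k b)"
| "lift k (Monus a b) = Monus (lift k a) (lift k b)"
| "lift k (Mult a b) = Mult (lift k a) (lift k b)"
| "lift k (BSum b e) = BSum (lift k b) (lift (Suc k) e)"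
| "lift k (Iter a e c) = Iter (lift k a) (lift (Suc k) e) (lift k c)"
| "lift k (Bind a e) = Bind (lift k a) (lift (Suc k) e)"
| "lift k (Oracle a) = Oracle (lift k a)"

abbreviation up :: "pexp \<Rightarrow> pexp" where
  "up \<equiv> lift 0"

lemma peval_lift: "k \<le> length xs \<Longrightarrow> peval w (lift k e) (take k xs @ y # drop k xs) = peval w e xs"
proof (induction e arbitrary: k xs)
  case (V i)
  then show ?case by (auto simp: nth_append min_def)
next
  case (BSum b e)
  then show ?case using BSum.IH(2)[of "Suc k" "_ # xs"] by simp
next
  case (Iter a e c)
  then show ?case using Iter.IH(2)[of "Suc k" "_ # xs"] by simp
next
  case (Bind a e)
  then show ?case using Bind.IH(2)[of "Suc k" "_ # xs"] by simp
qed auto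

lemma peval_up [simp]: "peval w (up e) (y # xs) = peval w e xs"
  using peval_lift[of 0 xs w e y] by simp

lemma peval_lift1: "peval w (lift 1 e) (j # i # xs) = peval w e (j # xs)"
  using peval_lift[of 1 "j # xs" w e i] by simp

text \<open>Truth values are \<open>0\<close> and \<open>1\<close>; a condition holds when it evaluates to a nonzero value.\<close>

definition sg :: "pexp \<Rightarrow> pexp" where "sg a = Monus (K 1) (Monus (K 1) a)"
definition bnot :: "pexp \<Rightarrow> pexp" where "bnot a = Monus (K 1) a"
definition band :: "pexp \<Rightarrow> pexp \<Rightarrow> pexp" where "band a b = Mult (sg a) (sg b)"
definition bor :: "pexp \<Rightarrow> pexp \<Rightarrow> pexp" where "bor a b = sg (Add a b)"
definition beq :: "pexp \<Rightarrow> pexp \<Rightarrow> pexp" where "beq a b = bnot (Add (Monus a b) (Monus b a))"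
definition bless :: "pexp \<Rightarrow> pexp \<Rightarrow> pexp" where "bless a b = sg (Monus b a)"
definition ble :: "pexp \<Rightarrow> pexp \<Rightarrow> pexp" where "ble a b = bnot (Monus a b)"
definition bex :: "pexp \<Rightarrow> pexp \<Rightarrow> pexp" where "bex b P = sg (BSum b P)"
definition ball :: "pexp \<Rightarrow> pexp \<Rightarrow> pexp" where "ball b P = bnot (BSum b (bnot P))"
definition cond :: "pexp \<Rightarrow> pexp \<Rightarrow> pexp \<Rightarrow> pexp" where
  "cond c a b = Add (Mult (sg c) a) (Mult (bnot c) b)"

text \<open>\<open>bmin b P\<close> counts the \<open>i < b\<close> before which \<open>P\<close> has not yet held.\<close>

definition bmin :: "pexp \<Rightarrow> pexp \<Rightarrow> pexp" where
  "bmin b P = BSum b (ball (Add (V 0) (K 1)) (bnot (lift 1 P)))"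

lemma peval_sg [simp]: "peval w (sg a) xs = of_bool (peval w a xs \<noteq> 0)"
  by (simp add: sg_def)
lemma peval_bnot [simp]: "peval w (bnot a) xs = of_bool (peval w a xs = 0)"
  by (simp add: bnot_def)
lemma peval_band [simp]: "peval w (band a b) xs = of_bool (peval w a xs \<noteq> 0 \<and> peval w b xs \<noteq> 0)"
  by (simp add: band_def)
lemma peval_bor [simp]: "peval w (bor a b) xs = of_bool (peval w a xs \<noteq> 0 \<or> peval w b xs \<noteq> 0)"
  by (simp add: bor_def)
lemma peval_beq [simp]: "peval w (beq a b) xs = of_bool (peval w a xs = peval w b xs)"
  by (simp add: beq_def)
lemma peval_bless [simp]: "peval w (bless a b) xs = of_bool (peval w a xs < peval w b xs)"
  by (simp add: bless_def)
lemma peval_ble [simp]: "peval w (ble a b) xs = of_bool (peval w a xs \<le> peval w b xs)"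
  by (simp add: ble_def)
lemma peval_bex [simp]: "peval w (bex b P) xs = of_bool (\<exists>i < peval w b xs. peval w P (i # xs) \<noteq> 0)"
  by (simp add: bex_def)
lemma peval_ball [simp]: "peval w (ball b P) xs = of_bool (\<forall>i < peval w b xs. peval w P (i # xs) \<noteq> 0)"
  by (auto simp: ball_def)
lemma peval_cond [simp]: "peval w (cond c a b) xs = (if peval w c xs \<noteq> 0 then peval w a xs else peval w b xs)"
  by (simp add: cond_def)

lemma sum_of_bool_before_Least:
  "(\<Sum>i<B. (of_bool (\<forall>j<Suc i. \<not> P j) :: nat)) = (if \<exists>i<B. P i then LEAST i. P i else B)"
proof (induction B)
  case (Suc B)
  show ?case
  proof (cases "\<exists>i<B. P i")
    case True
    then have "(LEAST i. P i) < B" by (meson LeastI_ex Least_le order.strict_trans1)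
    with True Suc show ?thesis by (auto intro: Least_le less_SucI)
  next
    case False
    with Suc show ?thesis
      by (auto simp: less_Suc_eq) (metis LeastI_ex Least_le le_antisym less_Suc_eq_le not_less_eq)
  qed
qed simp

lemma peval_bmin [simp]: "peval w (bmin b P) xs =
  (if \<exists>i < peval w b xs. peval w P (i # xs) \<noteq> 0 then LEAST i. peval w P (i # xs) \<noteq> 0 else peval w b xs)"
  using sum_of_bool_before_Least[where B="peval w b xs" and P="\<lambda>i. peval w P (i # xs) \<noteq> 0"]
  unfolding bmin_def peval.simps peval_ball peval_bnot peval_lift1 by simp

lemma peval_bmin_unique:
  assumes "x < peval w b xs" and "\<And>i. peval w P (i # xs) \<noteq> 0 \<longleftrightarrow> i = x"
  shows "peval w (bmin b P) xs = x"
  using assms by (auto intro: Least_equality)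

definition dfst :: "nat \<Rightarrow> nat" where "dfst x = fst (prod_decode x)"
definition dsnd :: "nat \<Rightarrow> nat" where "dsnd x = snd (prod_decode x)"

lemma dfst_prod_encode [simp]: "dfst (prod_encode (a, b)) = a"
  by (simp add: dfst_def)

lemma dsnd_prod_encode [simp]: "dsnd (prod_encode (a, b)) = b"
  by (simp add: dsnd_def)

definition epair :: "pexp \<Rightarrow> pexp \<Rightarrow> pexp" where
  "epair a b = Add (BSum (Add (Add a b) (K 1)) (V 0)) a"

lemma peval_epair [simp]: "peval w (epair a b) xs = prod_encode (peval w a xs, peval w b xs)"
proof -
  have "(\<Sum>i<Suc m. i) = triangle m" for m by (induction m) auto
  then show ?thesis by (simp add: epair_def prod_encode_def)
qed

text \<open>Both components of a pair are bounded by its code, so a bounded search inverts \<open>epair\<close>.\<close>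

definition efst :: "pexp \<Rightarrow> pexp" where
  "efst n = Bind n (bmin (Add (V 0) (K 1)) (bex (Add (V 1) (K 1)) (beq (V 2) (epair (V 1) (V 0)))))"

definition esnd :: "pexp \<Rightarrow> pexp" where
  "esnd n = Bind n (bmin (Add (V 0) (K 1)) (bex (Add (V 1) (K 1)) (beq (V 2) (epair (V 0) (V 1)))))"

lemma peval_efst [simp]: "peval w (efst n) xs = dfst (peval w n xs)"
proof -
  obtain a b where N: "peval w n xs = prod_encode (a, b)" by (metis prod_decode_inverse surj_pair)
  have "a \<le> prod_encode (a, b)" "b \<le> prod_encode (a, b)"
    by (rule le_prod_encode_1, rule le_prod_encode_2)
  then show ?thesis unfolding efst_def peval.simps(8)
    by (subst peval_bmin_unique[where x=a]) (auto simp: N prod_encode_eq)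
qed

lemma peval_esnd [simp]: "peval w (esnd n) xs = dsnd (peval w n xs)"
proof -
  obtain a b where N: "peval w n xs = prod_encode (a, b)" by (metis prod_decode_inverse surj_pair)
  have "a \<le> prod_encode (a, b)" "b \<le> prod_encode (a, b)"
    by (rule le_prod_encode_1, rule le_prod_encode_2)
  then show ?thesis unfolding esnd_def peval.simps(8)
    by (subst peval_bmin_unique[where x=b]) (auto simp: N prod_encode_eq)
qed

definition dhd :: "nat \<Rightarrow> nat" where "dhd x = dfst (x - 1)"
definition dtl :: "nat \<Rightarrow> nat" where "dtl x = dsnd (x - 1)"
definition dnth :: "nat \<Rightarrow> nat \<Rightarrow> nat" where "dnth l j = dhd ((dtl ^^ j) l)"
definition dlength :: "nat \<Rightarrow> nat" where "dlength l = length (list_decode l)"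

lemma funpow_dtl_list_encode: "(dtl ^^ i) (list_encode xs) = list_encode (drop i xs)"
proof (induction i arbitrary: xs)
  case (Suc i)
  have "dtl 0 = 0"
    using dsnd_prod_encode[of 0 0] by (simp add: dtl_def prod_encode_def)
  then have "dtl (list_encode xs) = list_encode (drop 1 xs)"
    by (cases xs) (simp_all add: dtl_def)
  then show ?case using Suc[of "drop 1 xs"] by (simp add: funpow_Suc_right del: funpow.simps)
qed simp

lemma dnth_eq_nth: "j < dlength l \<Longrightarrow> dnth l j = list_decode l ! j"
  using funpow_dtl_list_encode[of j "list_decode l"]
  by (simp add: dnth_def dlength_def dhd_def Cons_nth_drop_Suc[symmetric])

lemma length_list_decode_le: "length (list_decode n) \<le> n"
proof (induction n rule: list_decode.induct)
  case (2 n)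
  obtain x y where xy: "prod_decode n = (x, y)" by fastforce
  then have "y \<le> n" by (metis le_prod_encode_2 prod_decode_inverse)
  with 2 xy show ?case by simp
qed simp

lemma all_less_dlength: "(\<forall>i<dlength l. P (dnth l i)) \<longleftrightarrow> (\<forall>x\<in>set (list_decode l). P x)"
  by (auto simp: dnth_eq_nth dlength_def all_set_conv_all_nth)

lemma ex_less_dlength: "(\<exists>i<dlength l. P (dnth l i)) \<longleftrightarrow> (\<exists>x\<in>set (list_decode l). P x)"
  using all_less_dlength[of l "\<lambda>x. \<not> P x"] by blast

definition ehd :: "pexp \<Rightarrow> pexp" where "ehd x = efst (Monus x (K 1))"
definition etl :: "pexp \<Rightarrow> pexp" where "etl x = esnd (Monus x (K 1))"
definition enth :: "pexp \<Rightarrow> pexp \<Rightarrow> pexp" where "enth l i = ehd (Iter l (etl (V 0)) i)"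

definition elength :: "pexp \<Rightarrow> pexp" where
  "elength l = Bind l (bmin (Add (V 0) (K 1)) (beq (Iter (V 1) (etl (V 0)) (V 0)) (K 0)))"

lemma peval_ehd [simp]: "peval w (ehd x) xs = dhd (peval w x xs)"
  by (simp add: ehd_def dhd_def)

lemma peval_etl [simp]: "peval w (etl x) xs = dtl (peval w x xs)"
  by (simp add: etl_def dtl_def)

lemma peval_enth [simp]: "peval w (enth l i) xs = dnth (peval w l xs) (peval w i xs)"
  by (simp add: enth_def dnth_def)

lemma peval_elength [simp]: "peval w (elength l) xs = dlength (peval w l xs)"
proof -
  let ?L = "peval w l xs"
  have "(dtl ^^ i) ?L = 0 \<longleftrightarrow> dlength ?L \<le> i" for i
    using funpow_dtl_list_encode[of i "list_decode ?L"]
    by (metis dlength_def drop_eq_Nil list_decode_inverse list_encode.simps(1) list_encode_eq)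
  moreover have "dlength ?L < Suc ?L" using length_list_decode_le[of ?L] by (simp add: dlength_def)
  ultimately show ?thesis by (auto simp: elength_def intro!: Least_equality)
qed

definition int_pos :: "nat \<Rightarrow> nat" where "int_pos x = (if even x then x div 2 else 0)"
definition int_neg :: "nat \<Rightarrow> nat" where "int_neg x = (if even x then 0 else Suc (x div 2))"

lemma int_decode_eq: "int_decode x = int (int_pos x) - int (int_neg x)"
  by (auto simp: int_decode_def sum_decode_def int_pos_def int_neg_def)

definition ehalf :: "pexp \<Rightarrow> pexp" where
  "ehalf x = Bind x (bmin (Add (V 0) (K 1)) (bless (V 1) (Mult (K 2) (Add (V 0) (K 1)))))"

definition eint_pos :: "pexp \<Rightarrow> pexp" where
  "eint_pos x = Bind x (cond (beq (Mult (K 2) (ehalf (V 0))) (V 0)) (ehalf (V 0)) (K 0))"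

definition eint_neg :: "pexp \<Rightarrow> pexp" where
  "eint_neg x = Bind x (cond (beq (Mult (K 2) (ehalf (V 0))) (V 0)) (K 0) (Add (ehalf (V 0)) (K 1)))"

lemma peval_ehalf [simp]: "peval w (ehalf x) xs = peval w x xs div 2"
proof -
  have "(LEAST i. peval w x xs < 2 * Suc i) = peval w x xs div 2"
    by (rule Least_equality) auto
  then show ?thesis by (auto simp: ehalf_def)
qed

lemma double_half_eq_iff_even: "2 * (x div 2) = x \<longleftrightarrow> even (x :: nat)"
  by presburger

lemma peval_eint_pos [simp]: "peval w (eint_pos x) xs = int_pos (peval w x xs)"
  by (simp add: eint_pos_def int_pos_def double_half_eq_iff_even)

lemma peval_eint_neg [simp]: "peval w (eint_neg x) xs = int_neg (peval w x xs)"
  by (simp add: eint_neg_def int_neg_def double_half_eq_iff_even)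

section \<open>Finite certificates for winning strategies\<close>

definition pattern_occurs :: "nat \<Rightarrow> fpattern list \<Rightarrow> config \<Rightarrow> bool" where
  "pattern_occurs d F c \<longleftrightarrow> (\<exists>q\<in>set F. appears d (map_of q) c)"

definition moves_in :: "nat \<Rightarrow> cell set \<Rightarrow> move set" where
  "moves_in k R = insert Pass {Put x a | x a. x \<in> R \<and> a < k}"

lemma config_of_Nil [simp]: "config_of k d [] = Map.empty"
  by (simp add: config_of_def)

lemma config_of_snoc [simp]: "config_of k d (h @ [m]) = apply_move k d (config_of k d h) m"
  by (simp add: config_of_def)

lemma length_history [simp]: "length (history s sA sB i) = i"
  by (induction i) auto

lemma pattern_occurs_mono: "pattern_occurs d F c \<Longrightarrow> c \<subseteq>\<^sub>m c' \<Longrightarrow> pattern_occurs d F c'"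
  unfolding pattern_occurs_def appears_def map_le_def by (metis domD domI)

lemma moves_in_mono: "R \<subseteq> R' \<Longrightarrow> moves_in k R \<subseteq> moves_in k R'"
  unfolding moves_in_def by blast

lemma finite_moves_in: "finite R \<Longrightarrow> finite (moves_in k R)"
proof -
  assume "finite R"
  moreover have "{Put x a | x a. x \<in> R \<and> a < k} = (\<lambda>(x, a). Put x a) ` (R \<times> {..<k})" by auto
  ultimately show ?thesis unfolding moves_in_def by simp
qed

definition closed_at :: "(nat \<Rightarrow> player) \<Rightarrow> nat \<Rightarrow> nat \<Rightarrow> fpattern list \<Rightarrow> cell set \<Rightarrow>
    move list set \<Rightarrow> move list \<Rightarrow> bool" where
  "closed_at s k d F R L h \<longleftrightarrow> pattern_occurs d F (config_of k d h) \<or>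
     (s (length h) = PlA \<and> (\<exists>m\<in>moves_in k R. h @ [m] \<in> L)) \<or>
     (s (length h) = PlB \<and> (\<forall>m\<in>moves_in k R. h @ [m] \<in> L))"

definition closed_positions :: "(nat \<Rightarrow> player) \<Rightarrow> nat \<Rightarrow> nat \<Rightarrow> fpattern list \<Rightarrow> cell set \<Rightarrow>
    move list set \<Rightarrow> bool" where
  "closed_positions s k d F R L \<longleftrightarrow> (\<forall>h\<in>L. closed_at s k d F R L h)"

lemma closed_at_mono: "closed_at s k d F R L h \<Longrightarrow> L \<subseteq> L' \<Longrightarrow> closed_at s k d F R L' h"
  unfolding closed_at_def by blast

subsection \<open>Soundness\<close>

definition restrict_move :: "nat \<Rightarrow> cell set \<Rightarrow> move \<Rightarrow> move" where
  "restrict_move k R m = (if m \<in> moves_in k R then m else Pass)"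

lemma restrict_move_in_moves_in: "restrict_move k R m \<in> moves_in k R"
  by (simp add: restrict_move_def moves_in_def)

lemma restrict_move_eq: "m \<in> moves_in k R \<Longrightarrow> restrict_move k R m = m"
  by (simp add: restrict_move_def)

lemma config_of_restrict_move: "config_of k d (map (restrict_move k R) h) = config_of k d h |` R"
proof (induction h rule: rev_induct)
  case (snoc m h)
  show ?case
  proof (cases m)
    case (Put x a)
    then show ?thesis using snoc
      by (auto simp: restrict_move_def moves_in_def apply_move_def restrict_map_def fun_eq_iff)
  qed (use snoc in \<open>simp add: restrict_move_def moves_in_def apply_move_def\<close>)
qed simp

text \<open>Player A follows \<open>L\<close> on the restriction of the actual play to \<open>R\<close>; B's moves outside
  \<open>R\<close> are seen as passes, and only add stones to the actual configuration.\<close>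

definition follow_positions :: "nat \<Rightarrow> cell set \<Rightarrow> move list set \<Rightarrow> strategy" where
  "follow_positions k R L h = (let p = map (restrict_move k R) h in
     if \<exists>m\<in>moves_in k R. p @ [m] \<in> L then SOME m. m \<in> moves_in k R \<and> p @ [m] \<in> L else Pass)"

lemma follow_positions_invariant:
  fixes sB :: strategy
  assumes closed: "closed_positions s k d F R L" and "[] \<in> L"
  defines "H \<equiv> history s (follow_positions k R L) sB"
  shows "(\<exists>j\<le>i. pattern_occurs d F (config_of k d (H j))) \<or> map (restrict_move k R) (H i) \<in> L"
proof (induction i)
  case 0
  then show ?case using \<open>[] \<in> L\<close> by (simp add: H_def)
next
  case (Suc i)
  let ?p = "map (restrict_move k R) (H i)"
  show ?case
  proof (cases "\<exists>j\<le>i. pattern_occurs d F (config_of k d (H j))")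
    case True
    then show ?thesis using le_SucI by blast
  next
    case False
    with Suc.IH have p: "?p \<in> L" by blast
    have "\<not> pattern_occurs d F (config_of k d ?p)"
      using False pattern_occurs_mono[of d F "config_of k d ?p" "config_of k d (H i)"]
      by (auto simp: config_of_restrict_move map_le_def)
    then have "(s i = PlA \<and> (\<exists>m\<in>moves_in k R. ?p @ [m] \<in> L)) \<or>
        (s i = PlB \<and> (\<forall>m\<in>moves_in k R. ?p @ [m] \<in> L))"
      using closed p unfolding closed_positions_def closed_at_def by (metis length_history length_map H_def)
    then show ?thesis
    proof
      assume A: "s i = PlA \<and> (\<exists>m\<in>moves_in k R. ?p @ [m] \<in> L)"
      then have ex: "\<exists>m. m \<in> moves_in k R \<and> ?p @ [m] \<in> L" by blast
      have "follow_positions k R L (H i) = (SOME m. m \<in> moves_in k R \<and> ?p @ [m] \<in> L)"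
        using A unfolding follow_positions_def Let_def by simp
      then have "follow_positions k R L (H i) \<in> moves_in k R \<and> ?p @ [follow_positions k R L (H i)] \<in> L"
        using someI_ex[OF ex] by simp
      then show ?thesis using A by (simp add: H_def restrict_move_eq)
    next
      assume "s i = PlB \<and> (\<forall>m\<in>moves_in k R. ?p @ [m] \<in> L)"
      then show ?thesis by (simp add: H_def restrict_move_in_moves_in)
    qed
  qed
qed

theorem winning_strategy_of_closed_positions:
  assumes "finite L" and "[] \<in> L" and "closed_positions s k d F R L"
  shows "A_has_winning_strategy k d F s"
  unfolding A_has_winning_strategy_def
proof (intro exI allI)
  fix sB
  let ?H = "history s (follow_positions k R L) sB"
  define N where "N = Suc (Max (length ` L))"
  have "map (restrict_move k R) (?H N) \<notin> L"
  proof
    assume "map (restrict_move k R) (?H N) \<in> L"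
    then have "N \<le> Max (length ` L)"
      using \<open>finite L\<close> by (metis Max_ge finite_imageI image_eqI length_history length_map)
    then show False by (simp add: N_def)
  qed
  then show "A_wins_play k d F s (follow_positions k R L) sB"
    using follow_positions_invariant[OF assms(3,2), where sB=sB and i=N]
    unfolding A_wins_play_def pattern_occurs_def by blast
qed

subsection \<open>Completeness\<close>

text \<open>Positions are pairs of a turn index and a configuration, which is all that the rest of
  the play depends on.\<close>

inductive forces_win :: "(nat \<Rightarrow> player) \<Rightarrow> nat \<Rightarrow> nat \<Rightarrow> fpattern list \<Rightarrow> cell set \<Rightarrow> nat \<Rightarrow> config \<Rightarrow> bool"
  for s k d F R where
  occurs: "pattern_occurs d F c \<Longrightarrow> forces_win s k d F R i c"
| move_A: "s i = PlA \<Longrightarrow> m \<in> moves_in k R \<Longrightarrow> forces_win s k d F R (Suc i) (apply_move k d c m) \<Longrightarrow>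
    forces_win s k d F R i c"
| move_B: "s i = PlB \<Longrightarrow> \<forall>m\<in>moves_in k R. forces_win s k d F R (Suc i) (apply_move k d c m) \<Longrightarrow>
    forces_win s k d F R i c"

lemma apply_move_Pass [simp]: "apply_move k d c Pass = c"
  by (simp add: apply_move_def)

lemma apply_move_restrict_move_UNIV: "apply_move k d c (restrict_move k UNIV m) = apply_move k d c m"
  by (cases m) (auto simp: restrict_move_def moves_in_def apply_move_def)

definition extends_outside :: "cell set \<Rightarrow> config \<Rightarrow> config \<Rightarrow> bool" where
  "extends_outside R c c' \<longleftrightarrow> c \<subseteq>\<^sub>m c' \<and> (\<forall>y\<in>R. c' y = c y)"

lemma extends_outside_refl: "extends_outside R c c"
  by (simp add: extends_outside_def)

lemma extends_outside_apply_move: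
  assumes "extends_outside R c c'" and "m \<in> moves_in k R"
  shows "extends_outside R (apply_move k d c m) (apply_move k d c' m)"
  using assms by (auto simp: extends_outside_def moves_in_def apply_move_def map_le_def dom_def)

lemma extends_outside_Put:
  assumes "extends_outside R c c'" and "x \<notin> R"
  shows "extends_outside R c (apply_move k d c' (Put x a))"
  using assms by (auto simp: extends_outside_def apply_move_def map_le_def dom_def)

lemma forces_win_extend:
  assumes "forces_win s k d F R i c" and "R \<subseteq> R'" and "extends_outside R c c'"
  shows "forces_win s k d F R' i c'"
  using assms(1,3)
proof (induction arbitrary: c' rule: forces_win.induct)
  case (occurs c i)
  then show ?case
    by (auto intro: forces_win.occurs pattern_occurs_mono simp: extends_outside_def)
next
  case (move_A i m c)
  then show ?case
    using moves_in_mono[OF \<open>R \<subseteq> R'\<close>] by (blast intro: forces_win.move_A extends_outside_apply_move)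
next
  case (move_B i c)
  have "forces_win s k d F R' (Suc i) (apply_move k d c' m)" if m: "m \<in> moves_in k R'" for m
  proof (cases "m \<in> moves_in k R")
    case True
    then show ?thesis using move_B by (blast intro: extends_outside_apply_move)
  next
    case False
    then obtain x a where "m = Put x a" "x \<notin> R" using m by (auto simp: moves_in_def)
    moreover have "Pass \<in> moves_in k R" by (simp add: moves_in_def)
    ultimately show ?thesis using move_B by (metis apply_move_Pass extends_outside_Put)
  qed
  then show ?case using move_B.hyps(1) by (blast intro: forces_win.move_B)
qed

lemma forces_win_mono: "forces_win s k d F R i c \<Longrightarrow> R \<subseteq> R' \<Longrightarrow> forces_win s k d F R' i c"
  using forces_win_extend extends_outside_refl by blast

lemma forces_win_of_winning_strategy:
  assumes "A_has_winning_strategy k d F s"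
  shows "forces_win s k d F UNIV 0 Map.empty"
proof (rule ccontr)
  assume lost: "\<not> forces_win s k d F UNIV 0 Map.empty"
  obtain sA where sA: "\<And>sB. A_wins_play k d F s sA sB"
    using assms unfolding A_has_winning_strategy_def by blast
  define spoil :: strategy where "spoil h = (SOME m. m \<in> moves_in k UNIV \<and>
      \<not> forces_win s k d F UNIV (Suc (length h)) (apply_move k d (config_of k d h) m))" for h
  let ?H = "history s sA spoil"
  have "\<not> forces_win s k d F UNIV i (config_of k d (?H i))" for i
  proof (induction i)
    case (Suc i)
    let ?c = "config_of k d (?H i)"
    show ?case
    proof (cases "s i")
      case PlA
      have "\<not> forces_win s k d F UNIV (Suc i) (apply_move k d ?c (restrict_move k UNIV (sA (?H i))))"
        using Suc PlA restrict_move_in_moves_in forces_win.move_A by blast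
      then show ?thesis using PlA by (simp add: apply_move_restrict_move_UNIV)
    next
      case PlB
      then have "\<exists>m. m \<in> moves_in k UNIV \<and> \<not> forces_win s k d F UNIV (Suc i) (apply_move k d ?c m)"
        using Suc forces_win.move_B by blast
      then have "\<not> forces_win s k d F UNIV (Suc i) (apply_move k d ?c (spoil (?H i)))"
        unfolding spoil_def by (metis (no_types, lifting) length_history someI_ex)
      then show ?thesis using PlB by simp
    qed
  qed (simp add: lost)
  moreover obtain i where "pattern_occurs d F (config_of k d (?H i))"
    using sA[of spoil] unfolding A_wins_play_def pattern_occurs_def by blast
  ultimately show False using forces_win.occurs by blast
qed

lemma finite_region_of_move:
  assumes "m \<in> moves_in k UNIV"
  shows "\<exists>R. finite R \<and> m \<in> moves_in k R"
proof (cases m)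
  case Pass
  then show ?thesis by (intro exI[of _ "{}"]) (simp add: moves_in_def)
next
  case (Put x a)
  with assms have "a < k" by (simp add: moves_in_def)
  with Put show ?thesis by (intro exI[of _ "{x}"]) (simp add: moves_in_def)
qed

text \<open>B's moves are answered inside the region \<open>R\<^sub>0\<close> that works after a pass, enlarged by the
  regions that work after B's finitely many placements in \<open>R\<^sub>0\<close>; B's moves outside \<open>R\<^sub>0\<close> are
  as good as a pass.\<close>

lemma forces_win_joint_region:
  assumes f: "\<forall>m\<in>moves_in k UNIV. finite (f m) \<and> forces_win s k d F (f m) (Suc i) (apply_move k d c m)"
  defines "R \<equiv> f Pass \<union> (\<Union>(x, a)\<in>f Pass \<times> {..<k}. f (Put x a))"
  shows "finite R" and "m \<in> moves_in k R \<Longrightarrow> forces_win s k d F R (Suc i) (apply_move k d c m)"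
proof -
  have Pass_move: "Pass \<in> moves_in k UNIV" and Put_move: "a < k \<Longrightarrow> Put x a \<in> moves_in k UNIV" for x a
    by (simp_all add: moves_in_def)
  then have R0: "finite (f Pass)" "forces_win s k d F (f Pass) (Suc i) c"
    using f by auto
  show "finite R"
    unfolding R_def using R0(1) f Put_move by (auto intro!: finite_UN_I)
  assume m: "m \<in> moves_in k R"
  show "forces_win s k d F R (Suc i) (apply_move k d c m)"
  proof (cases m)
    case Pass
    then show ?thesis using R0(2) forces_win_mono[of s k d F "f Pass" _ _ R] by (simp add: R_def)
  next
    case (Put x a)
    then have "a < k" using m by (simp add: moves_in_def)
    show ?thesis
    proof (cases "x \<in> f Pass")
      case True
      then have "f (Put x a) \<subseteq> R" using \<open>a < k\<close> unfolding R_def by blast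
      then show ?thesis using f Put_move[OF \<open>a < k\<close>] \<open>m = Put x a\<close> forces_win_mono by blast
    next
      case False
      have "f Pass \<subseteq> R" by (simp add: R_def)
      then show ?thesis
        using forces_win_extend[OF R0(2) _ extends_outside_Put[OF extends_outside_refl False]]
          \<open>m = Put x a\<close> by blast
    qed
  qed
qed

lemma forces_win_finite_region:
  "forces_win s k d F UNIV i c \<Longrightarrow> \<exists>R. finite R \<and> forces_win s k d F R i c"
proof (induction rule: forces_win.induct)
  case (occurs c i)
  then show ?case by (intro exI[of _ "{}"]) (simp add: forces_win.occurs)
next
  case (move_A i m c)
  then obtain R0 Rm where "finite R0" "forces_win s k d F R0 (Suc i) (apply_move k d c m)"
    and "finite Rm" "m \<in> moves_in k Rm"
    using finite_region_of_move by blast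
  then have "forces_win s k d F (R0 \<union> Rm) i c"
    using move_A.hyps(1) moves_in_mono[of Rm "R0 \<union> Rm"] forces_win_mono[of s k d F R0 _ _ "R0 \<union> Rm"]
    by (blast intro: forces_win.move_A)
  then show ?case using \<open>finite R0\<close> \<open>finite Rm\<close> by blast
next
  case (move_B i c)
  then have "\<forall>m\<in>moves_in k UNIV. \<exists>R. finite R \<and> forces_win s k d F R (Suc i) (apply_move k d c m)"
    by blast
  from bchoice[OF this] obtain f where f: "\<forall>m\<in>moves_in k UNIV. finite (f m) \<and>
      forces_win s k d F (f m) (Suc i) (apply_move k d c m)"
    by blast
  let ?R = "f Pass \<union> (\<Union>(x, a)\<in>f Pass \<times> {..<k}. f (Put x a))"
  have "forces_win s k d F ?R i c"
    using move_B.hyps(1) forces_win_joint_region(2)[OF f] by (intro forces_win.move_B) auto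
  with forces_win_joint_region(1)[OF f] show ?case by blast
qed

lemma closed_positions_insert:
  "closed_positions s k d F R L \<Longrightarrow> closed_at s k d F R (insert h L) h \<Longrightarrow>
    closed_positions s k d F R (insert h L)"
  unfolding closed_positions_def by (blast intro: closed_at_mono)

lemma closed_positions_UN:
  assumes "\<And>m. m \<in> M \<Longrightarrow> closed_positions s k d F R (L m)"
  shows "closed_positions s k d F R (\<Union>m\<in>M. L m)"
  unfolding closed_positions_def
proof
  fix h assume "h \<in> (\<Union>m\<in>M. L m)"
  then obtain m where "m \<in> M" "h \<in> L m" by blast
  then show "closed_at s k d F R (\<Union>m\<in>M. L m) h"
    using assms closed_at_mono[of s k d F R "L m" h] unfolding closed_positions_def by blast
qed

lemma closed_positions_of_forces_win:
  assumes "forces_win s k d F R i c" and "finite R"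
  shows "length h = i \<Longrightarrow> config_of k d h = c \<Longrightarrow>
    \<exists>L. finite L \<and> h \<in> L \<and> closed_positions s k d F R L"
  using assms(1)
proof (induction arbitrary: h rule: forces_win.induct)
  case (occurs c i)
  then have "closed_positions s k d F R {h}"
    by (auto simp: closed_positions_def closed_at_def)
  then show ?case by blast
next
  case (move_A i m c)
  have "\<exists>L. finite L \<and> h @ [m] \<in> L \<and> closed_positions s k d F R L"
    using move_A.IH[of "h @ [m]"] move_A.prems by simp
  then obtain L where "finite L" "h @ [m] \<in> L" "closed_positions s k d F R L" by blast
  moreover have "closed_at s k d F R (insert h L) h"
    using move_A.hyps(1,2) move_A.prems(1) \<open>h @ [m] \<in> L\<close> unfolding closed_at_def by blast
  ultimately show ?case by (blast intro: closed_positions_insert)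
next
  case (move_B i c)
  then have "\<forall>m\<in>moves_in k R. \<exists>L. finite L \<and> h @ [m] \<in> L \<and> closed_positions s k d F R L"
    by auto
  from bchoice[OF this] obtain L where L: "\<forall>m\<in>moves_in k R.
      finite (L m) \<and> h @ [m] \<in> L m \<and> closed_positions s k d F R (L m)"
    by blast
  let ?L = "insert h (\<Union>m\<in>moves_in k R. L m)"
  have "finite ?L" using L finite_moves_in[OF \<open>finite R\<close>] by auto
  moreover have "closed_at s k d F R ?L h"
    using L move_B.hyps(1) move_B.prems(1) unfolding closed_at_def by blast
  then have "closed_positions s k d F R ?L"
    using L by (intro closed_positions_insert closed_positions_UN) blast+
  ultimately show ?case by blast
qed

theorem winning_strategy_iff_closed_positions:
  "A_has_winning_strategy k d F s \<longleftrightarrow>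
    (\<exists>R L. finite R \<and> finite L \<and> [] \<in> L \<and> closed_positions s k d F R L)"
proof
  assume "A_has_winning_strategy k d F s"
  then obtain R where R: "finite R" "forces_win s k d F R 0 Map.empty"
    using forces_win_finite_region[OF forces_win_of_winning_strategy] by blast
  then obtain L where "finite L" "[] \<in> L" "closed_positions s k d F R L"
    using closed_positions_of_forces_win[OF R(2) R(1), of "[]"] by auto
  with R(1) show "\<exists>R L. finite R \<and> finite L \<and> [] \<in> L \<and> closed_positions s k d F R L"
    by blast
next
  assume "\<exists>R L. finite R \<and> finite L \<and> [] \<in> L \<and> closed_positions s k d F R L"
  then obtain R L where "finite L" "[] \<in> L" "closed_positions s k d F R L" by blast
  then show "A_has_winning_strategy k d F s" by (rule winning_strategy_of_closed_positions)
qed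

section \<open>Checking certificates arithmetically\<close>

definition dec_cell :: "nat \<Rightarrow> cell" where
  "dec_cell x = map int_decode (list_decode x)"

definition enc_cell :: "cell \<Rightarrow> nat" where
  "enc_cell x = list_encode (map int_encode x)"

definition dec_move :: "nat \<Rightarrow> move" where
  "dec_move m = (if m = 0 then Pass else Put (dec_cell (dfst (m - 1))) (dsnd (m - 1)))"

primrec enc_move :: "move \<Rightarrow> nat" where
  "enc_move Pass = 0"
| "enc_move (Put x a) = Suc (prod_encode (enc_cell x, a))"

definition dec_hist :: "nat \<Rightarrow> move list" where
  "dec_hist h = map dec_move (list_decode h)"

lemma dec_cell_enc_cell [simp]: "dec_cell (enc_cell x) = x"
  by (simp add: dec_cell_def enc_cell_def map_idI)

lemma enc_cell_dec_cell [simp]: "enc_cell (dec_cell x) = x"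
  by (simp add: dec_cell_def enc_cell_def map_idI)

lemma dec_cell_inject [simp]: "dec_cell x = dec_cell y \<longleftrightarrow> x = y"
  by (metis enc_cell_dec_cell)

lemma dec_move_enc_move [simp]: "dec_move (enc_move m) = m"
  by (cases m) (auto simp: dec_move_def)

lemma enc_move_dec_move [simp]: "enc_move (dec_move m) = m"
  by (auto simp: dec_move_def dfst_def dsnd_def)

lemma dec_hist_list_encode [simp]: "dec_hist (list_encode (map enc_move hr)) = hr"
  by (simp add: dec_hist_def map_idI)

lemma dec_hist_inject [simp]: "dec_hist x = dec_hist y \<longleftrightarrow> x = y"
proof
  assume "dec_hist x = dec_hist y"
  then have "map enc_move (dec_hist x) = map enc_move (dec_hist y)" by simp
  then have "list_decode x = list_decode y" by (simp add: dec_hist_def map_idI)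
  then show "x = y" by (metis list_decode_inverse)
qed simp

lemma dec_hist_0 [simp]: "dec_hist 0 = []"
  by (simp add: dec_hist_def)

lemma dec_hist_Suc_prod_encode: "dec_hist (Suc (prod_encode (m, h))) = dec_move m # dec_hist h"
  by (simp add: dec_hist_def)

lemma dec_move_0 [simp]: "dec_move 0 = Pass"
  by (simp add: dec_move_def)

lemma dec_move_Suc_prod_encode [simp]: "dec_move (Suc (prod_encode (r, a))) = Put (dec_cell r) a"
  by (simp add: dec_move_def)

lemma length_dec_cell [simp]: "length (dec_cell x) = dlength x"
  by (simp add: dec_cell_def dlength_def)

lemma length_dec_hist [simp]: "length (dec_hist h) = dlength h"
  by (simp add: dec_hist_def dlength_def)

lemma nth_dec_cell: "t < dlength x \<Longrightarrow> dec_cell x ! t = int_decode (dnth x t)"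
  by (simp add: dec_cell_def dnth_eq_nth) (simp add: dlength_def)

lemma nth_dec_hist: "i < dlength h \<Longrightarrow> dec_hist h ! i = dec_move (dnth h i)"
  by (simp add: dec_hist_def dnth_eq_nth) (simp add: dlength_def)

text \<open>Histories are stored in reverse, so that a successor position is a \<open>Cons\<close>. The colour of
  a cell is then set by the legal placement on it with the largest index.\<close>

definition places_at :: "nat \<Rightarrow> nat \<Rightarrow> move \<Rightarrow> cell \<Rightarrow> bool" where
  "places_at k d m y \<longleftrightarrow> (\<exists>a. m = Put y a \<and> a < k) \<and> length y = d"

lemma config_of_rev_Cons: "config_of k d (rev (m # hr)) y =
   (if config_of k d (rev hr) y = None \<and> places_at k d m y
    then Some (case m of Put _ a \<Rightarrow> a | Pass \<Rightarrow> 0) else config_of k d (rev hr) y)"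
  by (cases m) (auto simp: apply_move_def places_at_def)

lemma config_of_rev_eq_None:
  "config_of k d (rev hr) y = None \<longleftrightarrow> (\<forall>i<length hr. \<not> places_at k d (hr ! i) y)"
proof (induction hr)
  case (Cons m hr)
  then show ?case unfolding config_of_rev_Cons by (auto simp: All_less_Suc2)
qed simp

lemma config_of_rev_eq_Some: "config_of k d (rev hr) y = Some a \<longleftrightarrow>
   (\<exists>i<length hr. places_at k d (hr ! i) y \<and> hr ! i = Put y a \<and>
     (\<forall>i'<length hr. i' \<le> i \<or> \<not> places_at k d (hr ! i') y))"
proof (induction hr)
  case (Cons m hr)
  let ?c = "config_of k d (rev hr) y"
  have "config_of k d (rev (m # hr)) y = Some a \<longleftrightarrow>
        (?c = None \<and> places_at k d m y \<and> m = Put y a) \<or> ?c = Some a"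
    unfolding config_of_rev_Cons by (auto simp: places_at_def)
  also have "\<dots> \<longleftrightarrow> (\<exists>i<length (m # hr). places_at k d ((m # hr) ! i) y \<and> (m # hr) ! i = Put y a \<and>
       (\<forall>i'<length (m # hr). i' \<le> i \<or> \<not> places_at k d ((m # hr) ! i') y))"
    unfolding Cons config_of_rev_eq_None by (auto simp: Ex_less_Suc2 All_less_Suc2)
  finally show ?case .
qed simp

text \<open>Integers are compared through their positive and negative parts, so that
  no subtraction is needed.\<close>

definition is_sum_code :: "nat \<Rightarrow> nat \<Rightarrow> nat \<Rightarrow> nat \<Rightarrow> bool" where
  "is_sum_code d xc vc jc \<longleftrightarrow> dlength xc = d \<and> (\<forall>t<d.
     int_pos (dnth xc t) + (int_neg (dnth vc t) + int_neg (dnth jc t)) =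
     int_pos (dnth vc t) + (int_pos (dnth jc t) + int_neg (dnth xc t)))"

definition is_sum_exp :: "nat \<Rightarrow> pexp \<Rightarrow> pexp \<Rightarrow> pexp \<Rightarrow> pexp" where
  "is_sum_exp d xc vc jc = band (beq (elength xc) (K d)) (ball (K d)
     (beq (Add (eint_pos (enth (up xc) (V 0))) (Add (eint_neg (enth (up vc) (V 0))) (eint_neg (enth (up jc) (V 0)))))
          (Add (eint_pos (enth (up vc) (V 0))) (Add (eint_pos (enth (up jc) (V 0))) (eint_neg (enth (up xc) (V 0)))))))"

lemma peval_is_sum_exp [simp]:
  "peval w (is_sum_exp d xc vc jc) xs = of_bool (is_sum_code d (peval w xc xs) (peval w vc xs) (peval w jc xs))"
  by (simp add: is_sum_exp_def is_sum_code_def)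

lemma is_sum_code_iff:
  assumes "dlength vc = d" and "dlength jc = d"
  shows "is_sum_code d xc vc jc \<longleftrightarrow> dec_cell xc = vadd (dec_cell vc) (dec_cell jc)"
proof -
  have "length (vadd (dec_cell vc) (dec_cell jc)) = d"
    and "\<And>t. t < d \<Longrightarrow> vadd (dec_cell vc) (dec_cell jc) ! t = dec_cell vc ! t + dec_cell jc ! t"
    using assms by (simp_all add: vadd_def)
  then have "dec_cell xc = vadd (dec_cell vc) (dec_cell jc) \<longleftrightarrow>
      dlength xc = d \<and> (\<forall>t<d. dec_cell xc ! t = dec_cell vc ! t + dec_cell jc ! t)"
    by (auto simp: list_eq_iff_nth_eq)
  also have "\<dots> \<longleftrightarrow> is_sum_code d xc vc jc"
    unfolding is_sum_code_def using assms by (auto simp: nth_dec_cell int_decode_eq)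
  finally show ?thesis by simp
qed

definition legal_code :: "nat \<Rightarrow> nat \<Rightarrow> nat \<Rightarrow> nat \<Rightarrow> nat \<Rightarrow> bool" where
  "legal_code k d vc jc mc \<longleftrightarrow> mc \<noteq> 0 \<and> is_sum_code d (dfst (mc - 1)) vc jc \<and> dsnd (mc - 1) < k"

definition legal_exp :: "pexp \<Rightarrow> nat \<Rightarrow> pexp \<Rightarrow> pexp \<Rightarrow> pexp \<Rightarrow> pexp" where
  "legal_exp k d vc jc mc =
     band (sg mc) (band (is_sum_exp d (efst (Monus mc (K 1))) vc jc) (bless (esnd (Monus mc (K 1))) k))"

lemma peval_legal_exp [simp]: "peval w (legal_exp k d vc jc mc) xs =
    of_bool (legal_code (peval w k xs) d (peval w vc xs) (peval w jc xs) (peval w mc xs))"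
  by (simp add: legal_exp_def legal_code_def)

lemma legal_code_iff:
  assumes "dlength vc = d" and "dlength jc = d"
  shows "legal_code k d vc jc mc \<longleftrightarrow> places_at k d (dec_move mc) (vadd (dec_cell vc) (dec_cell jc))"
proof -
  have "length (vadd (dec_cell vc) (dec_cell jc)) = d" using assms by (simp add: vadd_def)
  then show ?thesis
    unfolding legal_code_def places_at_def dec_move_def using is_sum_code_iff[OF assms] by auto
qed

definition colour_code :: "nat \<Rightarrow> nat \<Rightarrow> nat \<Rightarrow> nat \<Rightarrow> nat \<Rightarrow> nat \<Rightarrow> bool" where
  "colour_code k d hc vc jc col \<longleftrightarrow> (\<exists>i<dlength hc. legal_code k d vc jc (dnth hc i) \<and>
     dsnd (dnth hc i - 1) = col \<and> (\<forall>i'<dlength hc. i' \<le> i \<or> \<not> legal_code k d vc jc (dnth hc i')))"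

definition colour_exp :: "pexp \<Rightarrow> nat \<Rightarrow> pexp \<Rightarrow> pexp \<Rightarrow> pexp \<Rightarrow> pexp \<Rightarrow> pexp" where
  "colour_exp k d hc vc jc col = bex (elength hc)
     (band (legal_exp (up k) d (up vc) (up jc) (enth (up hc) (V 0)))
       (band (beq (esnd (Monus (enth (up hc) (V 0)) (K 1))) (up col))
         (ball (elength (up hc)) (bor (ble (V 0) (V 1))
           (bnot (legal_exp (up (up k)) d (up (up vc)) (up (up jc)) (enth (up (up hc)) (V 0))))))))"

lemma peval_colour_exp [simp]: "peval w (colour_exp k d hc vc jc col) xs =
    of_bool (colour_code (peval w k xs) d (peval w hc xs) (peval w vc xs) (peval w jc xs) (peval w col xs))"
  by (simp add: colour_exp_def colour_code_def)

lemma colour_code_iff: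
  assumes "dlength vc = d" and "dlength jc = d"
  shows "colour_code k d hc vc jc col \<longleftrightarrow>
    config_of k d (rev (dec_hist hc)) (vadd (dec_cell vc) (dec_cell jc)) = Some col"
proof -
  let ?y = "vadd (dec_cell vc) (dec_cell jc)"
  have legal: "legal_code k d vc jc (dnth hc i) \<longleftrightarrow> places_at k d (dec_hist hc ! i) ?y"
    if "i < dlength hc" for i
    using legal_code_iff[OF assms] that by (simp add: nth_dec_hist)
  have colour: "dec_hist hc ! i = Put ?y col \<longleftrightarrow> dsnd (dnth hc i - 1) = col"
    if "i < dlength hc" and "places_at k d (dec_hist hc ! i) ?y" for i
    using that by (auto simp: nth_dec_hist places_at_def dec_move_def split: if_splits)
  show ?thesis
    unfolding config_of_rev_eq_Some colour_code_def length_dec_hist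
    by (rule ex_cong1, use legal colour in blast)
qed

definition dec_patterns :: "nat \<Rightarrow> fpattern list" where
  "dec_patterns Fc = map (\<lambda>p. map decode_entry (list_decode p)) (list_decode Fc)"

lemma decode_entry_eq: "decode_entry e = (dec_cell (dfst e), dsnd e)"
  by (simp add: decode_entry_def dec_cell_def dfst_def dsnd_def split: prod.splits)

lemma decode_instance_eq: "decode_instance n = (dfst n, dec_patterns (dsnd n))"
  by (simp add: decode_instance_def dec_patterns_def dfst_def dsnd_def split: prod.splits)

lemma length_dec_patterns [simp]: "length (dec_patterns Fc) = dlength Fc"
  by (simp add: dec_patterns_def dlength_def)

lemma nth_dec_patterns:
  "qi < dlength Fc \<Longrightarrow> dec_patterns Fc ! qi = map decode_entry (list_decode (dnth Fc qi))"
  by (simp add: dec_patterns_def dnth_eq_nth) (simp add: dlength_def)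

definition valid_code :: "nat \<Rightarrow> nat \<Rightarrow> nat \<Rightarrow> bool" where
  "valid_code k d Fc \<longleftrightarrow> (\<forall>qi<dlength Fc.
     (\<forall>a<dlength (dnth Fc qi). \<forall>b<dlength (dnth Fc qi).
        a = b \<or> dfst (dnth (dnth Fc qi) a) \<noteq> dfst (dnth (dnth Fc qi) b)) \<and>
     (\<forall>a<dlength (dnth Fc qi). dlength (dfst (dnth (dnth Fc qi) a)) = d \<and> dsnd (dnth (dnth Fc qi) a) < k))"

definition valid_exp :: "pexp \<Rightarrow> nat \<Rightarrow> pexp \<Rightarrow> pexp" where
  "valid_exp k d Fc = ball (elength Fc) (Bind (enth (up Fc) (V 0))
     (band (ball (elength (V 0)) (ball (elength (V 1))
             (bor (beq (V 1) (V 0)) (bnot (beq (efst (enth (V 2) (V 1))) (efst (enth (V 2) (V 0))))))))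
           (ball (elength (V 0)) (band (beq (elength (efst (enth (V 1) (V 0)))) (K d))
             (bless (esnd (enth (V 1) (V 0))) (up (up (up k))))))))"

lemma peval_valid_exp [simp]:
  "peval w (valid_exp k d Fc) xs = of_bool (valid_code (peval w k xs) d (peval w Fc xs))"
  by (simp add: valid_exp_def valid_code_def)

lemma valid_pattern_code_iff:
  "(distinct (map fst (map decode_entry (list_decode p))) \<and>
    (\<forall>(x, a)\<in>set (map decode_entry (list_decode p)). length x = d \<and> a < k)) \<longleftrightarrow>
   ((\<forall>a<dlength p. \<forall>b<dlength p. a = b \<or> dfst (dnth p a) \<noteq> dfst (dnth p b)) \<and>
    (\<forall>a<dlength p. dlength (dfst (dnth p a)) = d \<and> dsnd (dnth p a) < k))"
proof -
  have "distinct (map fst (map decode_entry (list_decode p))) \<longleftrightarrow>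
        (\<forall>a<dlength p. \<forall>b<dlength p. a = b \<or> dfst (dnth p a) \<noteq> dfst (dnth p b))"
    by (auto simp: distinct_conv_nth decode_entry_eq dlength_def dnth_eq_nth)
  moreover have "(\<forall>(x, a)\<in>set (map decode_entry (list_decode p)). length x = d \<and> a < k) \<longleftrightarrow>
        (\<forall>a<dlength p. dlength (dfst (dnth p a)) = d \<and> dsnd (dnth p a) < k)"
    unfolding all_less_dlength[where P="\<lambda>x. dlength (dfst x) = d \<and> dsnd x < k"]
    by (auto simp: decode_entry_eq)
  ultimately show ?thesis by simp
qed

lemma valid_code_iff: "valid_code k d Fc \<longleftrightarrow> valid_instance k d (dec_patterns Fc)"
proof -
  have "valid_code k d Fc \<longleftrightarrow> (\<forall>p\<in>set (list_decode Fc).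
     (\<forall>a<dlength p. \<forall>b<dlength p. a = b \<or> dfst (dnth p a) \<noteq> dfst (dnth p b)) \<and>
     (\<forall>a<dlength p. dlength (dfst (dnth p a)) = d \<and> dsnd (dnth p a) < k))"
    unfolding valid_code_def by (rule all_less_dlength)
  also have "\<dots> \<longleftrightarrow> valid_instance k d (dec_patterns Fc)"
    unfolding valid_instance_def dec_patterns_def using valid_pattern_code_iff by auto
  finally show ?thesis .
qed

fun witness_ok :: "nat \<Rightarrow> nat \<Rightarrow> fpattern list \<Rightarrow> move list \<Rightarrow> (nat \<times> cell) option \<Rightarrow> bool" where
  "witness_ok k d F hr None = False"
| "witness_ok k d F hr (Some (qi, v)) = (qi < length F \<and> length v = d \<and>
     (\<forall>(j, a)\<in>set (F ! qi). config_of k d (rev hr) (vadd v j) = Some a))"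

definition dec_witness :: "nat \<Rightarrow> (nat \<times> cell) option" where
  "dec_witness wc = (if wc = 0 then None else Some (dfst (wc - 1), dec_cell (dsnd (wc - 1))))"

primrec enc_witness :: "(nat \<times> cell) option \<Rightarrow> nat" where
  "enc_witness None = 0"
| "enc_witness (Some qv) = Suc (prod_encode (fst qv, enc_cell (snd qv)))"

lemma dec_witness_enc_witness [simp]: "dec_witness (enc_witness wo) = wo"
  by (cases wo) (auto simp: dec_witness_def)

lemma witness_ok_imp_pattern_occurs:
  assumes "witness_ok k d F hr wo"
  shows "pattern_occurs d F (config_of k d (rev hr))"
proof -
  obtain qi v where "wo = Some (qi, v)" using assms by (cases wo) auto
  with assms have "qi < length F" "length v = d"
    and occ: "\<forall>(j, a)\<in>set (F ! qi). config_of k d (rev hr) (vadd v j) = Some a"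
    by auto
  moreover have "\<forall>j\<in>dom (map_of (F ! qi)). config_of k d (rev hr) (vadd v j) = map_of (F ! qi) j"
  proof
    fix j assume "j \<in> dom (map_of (F ! qi))"
    then obtain a where a: "map_of (F ! qi) j = Some a" by blast
    then have "(j, a) \<in> set (F ! qi)" by (rule map_of_SomeD)
    then show "config_of k d (rev hr) (vadd v j) = map_of (F ! qi) j" using occ a by auto
  qed
  ultimately show ?thesis unfolding pattern_occurs_def appears_def by force
qed

lemma pattern_occurs_imp_witness_ok:
  assumes "valid_instance k d F" and "pattern_occurs d F (config_of k d h)"
  shows "\<exists>qv. witness_ok k d F (rev h) (Some qv)"
proof -
  obtain q v where q: "q \<in> set F" and "length v = d"
    and occ: "\<forall>j\<in>dom (map_of q). config_of k d h (vadd v j) = map_of q j"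
    using assms(2) unfolding pattern_occurs_def appears_def by blast
  obtain qi where "qi < length F" "F ! qi = q" using q by (meson in_set_conv_nth)
  moreover have "distinct (map fst q)" using assms(1) q unfolding valid_instance_def by blast
  then have "\<forall>(j, a)\<in>set q. config_of k d h (vadd v j) = Some a"
    using occ by (auto simp: domI)
  ultimately have "witness_ok k d F (rev h) (Some (qi, v))" using \<open>length v = d\<close> by simp
  then show ?thesis by blast
qed

definition witness_code :: "nat \<Rightarrow> nat \<Rightarrow> nat \<Rightarrow> nat \<Rightarrow> nat \<Rightarrow> bool" where
  "witness_code k d Fc hc wc \<longleftrightarrow> wc \<noteq> 0 \<and> dfst (wc - 1) < dlength Fc \<and> dlength (dsnd (wc - 1)) = d \<and>
     (\<forall>a < dlength (dnth Fc (dfst (wc - 1))).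
        colour_code k d hc (dsnd (wc - 1)) (dfst (dnth (dnth Fc (dfst (wc - 1))) a))
          (dsnd (dnth (dnth Fc (dfst (wc - 1))) a)))"

definition witness_exp :: "pexp \<Rightarrow> nat \<Rightarrow> pexp \<Rightarrow> pexp \<Rightarrow> pexp \<Rightarrow> pexp" where
  "witness_exp k d Fc hc wc = band (sg wc) (Bind (Monus wc (K 1))
     (band (bless (efst (V 0)) (elength (up Fc))) (band (beq (elength (esnd (V 0))) (K d))
       (Bind (enth (up Fc) (efst (V 0))) (ball (elength (V 0))
         (colour_exp (up (up (up k))) d (up (up (up hc))) (esnd (V 2))
           (efst (enth (V 1) (V 0))) (esnd (enth (V 1) (V 0)))))))))"

lemma peval_witness_exp [simp]: "peval w (witness_exp k d Fc hc wc) xs =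
    of_bool (witness_code (peval w k xs) d (peval w Fc xs) (peval w hc xs) (peval w wc xs))"
  by (simp add: witness_exp_def witness_code_def)

lemma witness_code_iff:
  assumes valid: "valid_instance k d (dec_patterns Fc)"
  shows "witness_code k d Fc hc wc \<longleftrightarrow> witness_ok k d (dec_patterns Fc) (dec_hist hc) (dec_witness wc)"
proof (cases "wc \<noteq> 0 \<and> dfst (wc - 1) < dlength Fc \<and> dlength (dsnd (wc - 1)) = d")
  case True
  define qi where "qi = dfst (wc - 1)"
  define vc where "vc = dsnd (wc - 1)"
  define p where "p = dnth Fc qi"
  have pattern: "dec_patterns Fc ! qi = map decode_entry (list_decode p)"
    using True nth_dec_patterns p_def qi_def by simp
  have "dec_patterns Fc ! qi \<in> set (dec_patterns Fc)" using True qi_def by simp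
  then have "dlength (dfst e) = d" if "e \<in> set (list_decode p)" for e
    using valid that unfolding valid_instance_def pattern by (fastforce simp: decode_entry_eq)
  then have "(\<forall>a<dlength p. colour_code k d hc vc (dfst (dnth p a)) (dsnd (dnth p a))) \<longleftrightarrow>
      (\<forall>(j, a)\<in>set (dec_patterns Fc ! qi). config_of k d (rev (dec_hist hc)) (vadd (dec_cell vc) j) = Some a)"
    unfolding all_less_dlength[where P="\<lambda>e. colour_code k d hc vc (dfst e) (dsnd e)"] pattern
    using colour_code_iff[of vc d] True vc_def by (auto simp: decode_entry_eq)
  then show ?thesis
    using True unfolding witness_code_def dec_witness_def qi_def[symmetric] vc_def[symmetric] p_def[symmetric]
    by simp
qed (auto simp: witness_code_def dec_witness_def)

text \<open>A certificate lists the cells of \<open>R\<close> and, for every history of \<open>L\<close>, its reverse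
  paired with a witness code (\<open>0\<close> if no pattern is claimed).\<close>

definition cell_set :: "nat \<Rightarrow> cell set" where
  "cell_set Rc = dec_cell ` set (list_decode Rc)"

definition hist_set :: "nat \<Rightarrow> move list set" where
  "hist_set Lc = dec_hist ` dfst ` set (list_decode Lc)"

lemma finite_cell_set: "finite (cell_set Rc)"
  by (simp add: cell_set_def)

definition mem_code :: "nat \<Rightarrow> nat \<Rightarrow> bool" where
  "mem_code Lc x \<longleftrightarrow> (\<exists>j<dlength Lc. dfst (dnth Lc j) = x)"

definition mem_exp :: "pexp \<Rightarrow> pexp \<Rightarrow> pexp" where
  "mem_exp Lc x = bex (elength Lc) (beq (efst (enth (up Lc) (V 0))) (up x))"

lemma peval_mem_exp [simp]: "peval w (mem_exp Lc x) xs = of_bool (mem_code (peval w Lc xs) (peval w x xs))"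
  by (simp add: mem_exp_def mem_code_def)

lemma mem_code_iff: "mem_code Lc hc \<longleftrightarrow> dec_hist hc \<in> hist_set Lc"
  unfolding mem_code_def ex_less_dlength[where P="\<lambda>e. dfst e = hc"] hist_set_def
  by (auto simp: image_iff)

definition cons_exp :: "pexp \<Rightarrow> pexp \<Rightarrow> pexp" where
  "cons_exp x l = Add (K 1) (epair x l)"

lemma peval_cons_exp [simp]: "peval w (cons_exp x l) xs = Suc (prod_encode (peval w x xs, peval w l xs))"
  by (simp add: cons_exp_def)

definition some_succ_code :: "nat \<Rightarrow> nat \<Rightarrow> nat \<Rightarrow> nat \<Rightarrow> bool" where
  "some_succ_code k Rc Lc hc \<longleftrightarrow> mem_code Lc (Suc (prod_encode (0, hc))) \<or>
     (\<exists>r<dlength Rc. \<exists>a<k. mem_code Lc (Suc (prod_encode (Suc (prod_encode (dnth Rc r, a)), hc))))"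

definition all_succ_code :: "nat \<Rightarrow> nat \<Rightarrow> nat \<Rightarrow> nat \<Rightarrow> bool" where
  "all_succ_code k Rc Lc hc \<longleftrightarrow> mem_code Lc (Suc (prod_encode (0, hc))) \<and>
     (\<forall>r<dlength Rc. \<forall>a<k. mem_code Lc (Suc (prod_encode (Suc (prod_encode (dnth Rc r, a)), hc))))"

definition some_succ_exp :: "pexp \<Rightarrow> pexp \<Rightarrow> pexp \<Rightarrow> pexp \<Rightarrow> pexp" where
  "some_succ_exp k Rc Lc hc = bor (mem_exp Lc (cons_exp (K 0) hc))
     (bex (elength Rc) (bex (up k)
       (mem_exp (up (up Lc)) (cons_exp (cons_exp (enth (up (up Rc)) (V 1)) (V 0)) (up (up hc))))))"

definition all_succ_exp :: "pexp \<Rightarrow> pexp \<Rightarrow> pexp \<Rightarrow> pexp \<Rightarrow> pexp" where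
  "all_succ_exp k Rc Lc hc = band (mem_exp Lc (cons_exp (K 0) hc))
     (ball (elength Rc) (ball (up k)
       (mem_exp (up (up Lc)) (cons_exp (cons_exp (enth (up (up Rc)) (V 1)) (V 0)) (up (up hc))))))"

lemma peval_some_succ_exp [simp]: "peval w (some_succ_exp k Rc Lc hc) xs =
    of_bool (some_succ_code (peval w k xs) (peval w Rc xs) (peval w Lc xs) (peval w hc xs))"
  by (simp add: some_succ_exp_def some_succ_code_def)

lemma peval_all_succ_exp [simp]: "peval w (all_succ_exp k Rc Lc hc) xs =
    of_bool (all_succ_code (peval w k xs) (peval w Rc xs) (peval w Lc xs) (peval w hc xs))"
  by (simp add: all_succ_exp_def all_succ_code_def)

lemma mem_code_Cons_iff: "mem_code Lc (Suc (prod_encode (mc, hc))) \<longleftrightarrow> dec_move mc # dec_hist hc \<in> hist_set Lc"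
  by (simp add: mem_code_iff dec_hist_Suc_prod_encode)

lemma moves_in_cell_set:
  "moves_in k (cell_set Rc) = insert Pass {Put (dec_cell r) a | r a. r \<in> set (list_decode Rc) \<and> a < k}"
  by (auto simp: moves_in_def cell_set_def)

lemma some_succ_code_iff:
  "some_succ_code k Rc Lc hc \<longleftrightarrow> (\<exists>m\<in>moves_in k (cell_set Rc). m # dec_hist hc \<in> hist_set Lc)"
proof -
  have "some_succ_code k Rc Lc hc \<longleftrightarrow> Pass # dec_hist hc \<in> hist_set Lc \<or>
     (\<exists>r\<in>set (list_decode Rc). \<exists>a<k. Put (dec_cell r) a # dec_hist hc \<in> hist_set Lc)"
    unfolding some_succ_code_def mem_code_Cons_iff dec_move_0 dec_move_Suc_prod_encode
    by (rule disj_cong[OF refl ex_less_dlength])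
  also have "\<dots> \<longleftrightarrow> (\<exists>m\<in>moves_in k (cell_set Rc). m # dec_hist hc \<in> hist_set Lc)"
    unfolding moves_in_cell_set by blast
  finally show ?thesis .
qed

lemma all_succ_code_iff:
  "all_succ_code k Rc Lc hc \<longleftrightarrow> (\<forall>m\<in>moves_in k (cell_set Rc). m # dec_hist hc \<in> hist_set Lc)"
proof -
  have "all_succ_code k Rc Lc hc \<longleftrightarrow> Pass # dec_hist hc \<in> hist_set Lc \<and>
     (\<forall>r\<in>set (list_decode Rc). \<forall>a<k. Put (dec_cell r) a # dec_hist hc \<in> hist_set Lc)"
    unfolding all_succ_code_def mem_code_Cons_iff dec_move_0 dec_move_Suc_prod_encode
    by (rule conj_cong[OF refl all_less_dlength])
  also have "\<dots> \<longleftrightarrow> (\<forall>m\<in>moves_in k (cell_set Rc). m # dec_hist hc \<in> hist_set Lc)"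
    unfolding moves_in_cell_set by blast
  finally show ?thesis .
qed

definition entry_ok :: "(nat \<Rightarrow> player) \<Rightarrow> nat \<Rightarrow> nat \<Rightarrow> fpattern list \<Rightarrow> cell set \<Rightarrow>
    move list set \<Rightarrow> move list \<Rightarrow> (nat \<times> cell) option \<Rightarrow> bool" where
  "entry_ok s k d F R H hr wo \<longleftrightarrow> witness_ok k d F hr wo \<or>
     (s (length hr) = PlA \<and> (\<exists>m\<in>moves_in k R. m # hr \<in> H)) \<or>
     (s (length hr) = PlB \<and> (\<forall>m\<in>moves_in k R. m # hr \<in> H))"

lemma closed_at_iff_entry_ok:
  assumes "valid_instance k d F"
  shows "closed_at s k d F R L h \<longleftrightarrow> (\<exists>wo. entry_ok s k d F R (rev ` L) (rev h) wo)"
proof -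
  have succ: "m # rev h \<in> rev ` L \<longleftrightarrow> h @ [m] \<in> L" for m
    by (metis image_iff rev_eq_Cons_iff rev_rev_ident)
  have "pattern_occurs d F (config_of k d h) \<longleftrightarrow> (\<exists>wo. witness_ok k d F (rev h) wo)"
    using witness_ok_imp_pattern_occurs[of k d F "rev h"] pattern_occurs_imp_witness_ok[OF assms]
    by (metis rev_rev_ident)
  then show ?thesis
    unfolding closed_at_def entry_ok_def length_rev succ by blast
qed

definition word_bit :: "(nat \<Rightarrow> player) \<Rightarrow> nat \<Rightarrow> nat" where
  "word_bit s i = (if s i = PlA then 0 else 1)"

definition entry_code :: "(nat \<Rightarrow> nat) \<Rightarrow> nat \<Rightarrow> nat \<Rightarrow> nat \<Rightarrow> nat \<Rightarrow> nat \<Rightarrow> nat \<Rightarrow> bool" where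
  "entry_code w k d Fc Rc Lc e \<longleftrightarrow> witness_code k d Fc (dfst e) (dsnd e) \<or>
     (w (dlength (dfst e)) = 0 \<and> some_succ_code k Rc Lc (dfst e)) \<or>
     (w (dlength (dfst e)) \<noteq> 0 \<and> all_succ_code k Rc Lc (dfst e))"

definition entry_exp :: "pexp \<Rightarrow> nat \<Rightarrow> pexp \<Rightarrow> pexp \<Rightarrow> pexp \<Rightarrow> pexp \<Rightarrow> pexp" where
  "entry_exp k d Fc Rc Lc e = Bind e (bor (witness_exp (up k) d (up Fc) (efst (V 0)) (esnd (V 0)))
     (bor (band (beq (Oracle (elength (efst (V 0)))) (K 0)) (some_succ_exp (up k) (up Rc) (up Lc) (efst (V 0))))
          (band (sg (Oracle (elength (efst (V 0))))) (all_succ_exp (up k) (up Rc) (up Lc) (efst (V 0))))))"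

lemma peval_entry_exp [simp]: "peval w (entry_exp k d Fc Rc Lc e) xs =
    of_bool (entry_code w (peval w k xs) d (peval w Fc xs) (peval w Rc xs) (peval w Lc xs) (peval w e xs))"
  by (simp add: entry_exp_def entry_code_def)

lemma entry_code_iff:
  assumes "valid_instance k d (dec_patterns Fc)"
  shows "entry_code (word_bit s) k d Fc Rc Lc e \<longleftrightarrow>
    entry_ok s k d (dec_patterns Fc) (cell_set Rc) (hist_set Lc) (dec_hist (dfst e)) (dec_witness (dsnd e))"
proof -
  have "s i = PlB \<longleftrightarrow> s i \<noteq> PlA" for i by (cases "s i") auto
  then show ?thesis
    unfolding entry_code_def entry_ok_def witness_code_iff[OF assms] some_succ_code_iff
      all_succ_code_iff length_dec_hist word_bit_def
    by auto
qed

definition cert_code :: "(nat \<Rightarrow> nat) \<Rightarrow> nat \<Rightarrow> nat \<Rightarrow> nat \<Rightarrow> bool" where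
  "cert_code w d c n \<longleftrightarrow> valid_code (dfst n) d (dsnd n) \<and> mem_code (dsnd c) 0 \<and>
     (\<forall>i<dlength (dsnd c). entry_code w (dfst n) d (dsnd n) (dfst c) (dsnd c) (dnth (dsnd c) i))"

definition cert_exp :: "nat \<Rightarrow> pexp" where
  "cert_exp d = Bind (efst (V 1)) (Bind (esnd (V 2)) (Bind (efst (V 2)) (Bind (esnd (V 3))
     (band (valid_exp (V 3) d (V 2)) (band (mem_exp (V 0) (K 0))
       (ball (elength (V 0)) (entry_exp (V 4) d (V 3) (V 2) (V 1) (enth (V 1) (V 0)))))))))"

lemma peval_cert_exp: "peval w (cert_exp d) [c, n] = of_bool (cert_code w d c n)"
  by (simp add: cert_exp_def cert_code_def)

lemma cert_code_iff: "cert_code (word_bit s) d c n \<longleftrightarrow>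
    valid_instance (dfst n) d (dec_patterns (dsnd n)) \<and> [] \<in> hist_set (dsnd c) \<and>
    (\<forall>e\<in>set (list_decode (dsnd c)). entry_ok s (dfst n) d (dec_patterns (dsnd n)) (cell_set (dfst c))
       (hist_set (dsnd c)) (dec_hist (dfst e)) (dec_witness (dsnd e)))"
proof -
  have "mem_code (dsnd c) 0 \<longleftrightarrow> [] \<in> hist_set (dsnd c)"
    using mem_code_iff[of "dsnd c" 0] by simp
  then show ?thesis
    unfolding cert_code_def valid_code_iff all_less_dlength using entry_code_iff by blast
qed

lemma closed_positions_of_cert_code:
  assumes "cert_code (word_bit s) d c n"
  defines "L \<equiv> rev ` hist_set (dsnd c)"
  shows "valid_instance (dfst n) d (dec_patterns (dsnd n))" and "finite L" and "[] \<in> L"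
    and "closed_positions s (dfst n) d (dec_patterns (dsnd n)) (cell_set (dfst c)) L"
proof -
  note cert = assms(1)[unfolded cert_code_iff]
  show valid: "valid_instance (dfst n) d (dec_patterns (dsnd n))" using cert by blast
  show "finite L" by (simp add: L_def hist_set_def)
  show "[] \<in> L" using cert by (force simp: L_def)
  have "rev ` L = hist_set (dsnd c)" by (simp add: L_def image_comp)
  then show "closed_positions s (dfst n) d (dec_patterns (dsnd n)) (cell_set (dfst c)) L"
    using cert unfolding closed_positions_def closed_at_iff_entry_ok[OF valid]
    by (auto simp: L_def hist_set_def)
qed

lemma cert_code_of_closed_positions:
  assumes valid: "valid_instance (dfst n) d (dec_patterns (dsnd n))"
    and "finite R" and "finite L" and "[] \<in> L"
    and closed: "closed_positions s (dfst n) d (dec_patterns (dsnd n)) R L"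
  shows "\<exists>c. cert_code (word_bit s) d c n"
proof -
  let ?entry_ok = "entry_ok s (dfst n) d (dec_patterns (dsnd n)) R (rev ` L)"
  obtain Rl Ll where "set Rl = R" "set Ll = L"
    using \<open>finite R\<close> \<open>finite L\<close> finite_list by metis
  define wit where "wit h = (SOME wo. ?entry_ok (rev h) wo)" for h
  define entry where "entry h = prod_encode (list_encode (map enc_move (rev h)), enc_witness (wit h))" for h
  define c where "c = prod_encode (list_encode (map enc_cell Rl), list_encode (map entry Ll))"
  have "?entry_ok (rev h) (wit h)" if "h \<in> L" for h
    using closed that unfolding closed_positions_def closed_at_iff_entry_ok[OF valid] wit_def
    by (blast intro: someI_ex)
  moreover have "cell_set (dfst c) = R"
    using \<open>set Rl = R\<close> by (simp add: c_def cell_set_def image_image)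
  moreover have entries: "set (list_decode (dsnd c)) = entry ` L"
    using \<open>set Ll = L\<close> by (simp add: c_def)
  moreover have "hist_set (dsnd c) = rev ` L"
    unfolding hist_set_def entries by (simp add: entry_def image_image)
  ultimately have "cert_code (word_bit s) d c n"
    unfolding cert_code_iff using valid \<open>[] \<in> L\<close> by (auto simp: entry_def)
  then show ?thesis ..
qed

theorem NADG_iff_cert_code: "n \<in> NADG s d \<longleftrightarrow> (\<exists>c. cert_code (word_bit s) d c n)"
proof -
  have "n \<in> NADG s d \<longleftrightarrow> valid_instance (dfst n) d (dec_patterns (dsnd n)) \<and>
      A_has_winning_strategy (dfst n) d (dec_patterns (dsnd n)) s"
    by (simp add: NADG_def decode_instance_eq)
  then show ?thesis
    unfolding winning_strategy_iff_closed_positions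
    by (meson closed_positions_of_cert_code cert_code_of_closed_positions finite_cell_set)
qed

theorem corollary2:
  fixes s :: "nat \<Rightarrow> player" and d :: nat
  assumes "computable_word s"
  shows "rec_enum (NADG s d)"
proof -
  obtain orc where orc: "\<And>i. eval orc [i] (word_bit s i)"
    using assms unfolding computable_word_def word_bit_def by blast
  have "NADG s d = {n. \<exists>c. cert_code (word_bit s) d c n}"
    using NADG_iff_cert_code by blast
  then show ?thesis
    using rec_enum_projection_pexp[OF orc peval_cert_exp] by simp
qed

end
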